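(* Let $\tau>0$, $\varepsilon>0$ and $A\ge\frac1{16}$. Let $\phi^0,\phi^1\in\mathcal C_{\rm per}$ with $\overline{\phi^0}=\overline{\phi^1}=0$, and let $(\phi^k)_{k\ge0}$ be the sequence generated by the scheme below. Let $C_1>0$ be a constant such that $\|\Delta_h\psi\|_2^2\ge C_1\|\psi\|_{H_h^2}^2$ for all $\psi\in\mathcal C_{\rm per}$ with $\overline\psi=0$. Set $C_0=\tilde F_h(\phi^1,\phi^0)$. Then for every $k\ge1$, $$\|\phi^k\|_{H_h^2}\le\sqrt{\frac{2(C_0+|\Omega|)}{C_1\varepsilon^2}}.$$
   Context: Let $L>0$, $N$ a positive integer, $h=L/N$, $\Omega=(0,L)^2$, $|\Omega|=L^2$. $\mathcal C_{\rm per}$ is the space of real grid functions $\phi_{i,j}$ ($i,j\in\mathbb Z$), $N$-periodic in each index, with mean $\overline\phi=\frac{h^2}{L^2}\sum_{i,j=1}^N\phi_{i,j}$. Vertex functions $g_{i+\frac12,j+\frac12}$ are periodic. Norms: $\|\phi\|_p^p=h^2\sum_{i,j=1}^N|\phi_{i,j}|^p$. Standard operators: - $D_x\phi_{i+\frac12,j}=(\phi_{i+1,j}-\phi_{i,j})/h$ and $D_y\phi_{i,j+\frac12}=(\phi_{i,j+1}-\phi_{i,j})/h$. - $\|\nabla_h\phi\|_2^2=h^2\sum_{i,j=1}^N[(D_x\phi_{i+\frac12,j})^2+(D_y\phi_{i,j+\frac12})^2]$. - $\Delta_h\phi_{i,j}=h^{-2}(\phi_{i+1,j}+\phi_{i-1,j}+\phi_{i,j+1}+\phi_{i,j-1}-4\phi_{i,j})$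 and $\Delta_h^2=\Delta_h\Delta_h$. - $\|\phi\|_{H_h^2}^2=\|\phi\|_2^2+\|\nabla_h\phi\|_2^2+\|\Delta_h\phi\|_2^2$. Center-to-vertex differences: - $\mathfrak D_x\phi_{i+\frac12,j+\frac12}=\frac1{2h}(\phi_{i+1,j+1}-\phi_{i,j+1}+\phi_{i+1,j}-\phi_{i,j})$. - $\mathfrak D_y\phi_{i+\frac12,j+\frac12}=\frac1{2h}(\phi_{i+1,j+1}-\phi_{i+1,j}+\phi_{i,j+1}-\phi_{i,j})$. - $|\nabla_h^{\mathsf v}\phi|^2=(\mathfrak D_x\phi)^2+(\mathfrak D_y\phi)^2$ and $\|\nabla_h^{\mathsf v}\phi\|_p^p=h^2\sum_{i,j=1}^N|\nabla_h^{\mathsf v}\phi|^p_{i+\frac12,j+\frac12}$. Vertex-to-center differences: - $\mathfrak d_xg_{i,j}=\frac1{2h}(g_{i+\frac12,j+\frac12}-g_{i-\frac12,j+\frac12}+g_{i+\frac12,j-\frac12}-g_{i-\frac12,j-\frac12})$. - $\mathfrak d_yg_{i,j}=\frac1{2h}(g_{i+\frac12,j+\frac12}-g_{i+\frac12,j-\frac12}+g_{i-\frac12,j+\frac12}-g_{i-\frac12,j-\frac12})$. Skew operators: - $\Delta_h^{\mathsf v}\phi=\mathfrak d_x\mathfrak D_x\phi+\mathfrak d_y\mathfrak D_y\phi$. - $\nabla_h^{\mathsf v}\cdot(|\nabla_h^{\mathsf v}\phi|^2\nabla_h^{\mathsf v}\phi)=\mathfrak d_x(r\mathfrak D_x\phi)+\mathfrak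 d_y(r\mathfrak D_y\phi)$ with $r=|\nabla_h^{\mathsf v}\phi|^2$. Energies: $$F_h(\phi)=\tfrac14\|\nabla_h^{\mathsf v}\phi\|_4^4-\tfrac12\|\nabla_h^{\mathsf v}\phi\|_2^2+\tfrac{\varepsilon^2}2\|\Delta_h\phi\|_2^2,$$ $$\tilde F_h(\phi,\psi)=F_h(\phi)+\tfrac1{4\tau}\|\phi-\psi\|_2^2+\tfrac12\|\nabla_h(\phi-\psi)\|_2^2.$$ Scheme: for $k\ge1$, $\phi^{k+1}\in\mathcal C_{\rm per}$ is the unique solution of $$\frac{3\phi^{k+1}-4\phi^k+\phi^{k-1}}{2\tau}=\nabla_h^{\mathsf v}\cdot(|\nabla_h^{\mathsf v}\phi^{k+1}|^2\nabla_h^{\mathsf v}\phi^{k+1})-\Delta_h^{\mathsf v}(2\phi^k-\phi^{k-1})-A\tau\Delta_h^2(\phi^{k+1}-\phi^k)-\varepsilon^2\Delta_h^2\phi^{k+1}.$$ *)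

theory Defs
  imports Complex_Main
begin

text \<open>Grid functions: cell-centred values phi i j at (i,j) as functions int => int => real.
 A vertex function g at vertex (i+1/2, j+1/2) is stored as g i j.\<close>

type_synonym grid = "int \<Rightarrow> int \<Rightarrow> real"

definition periodic :: "nat \<Rightarrow> grid \<Rightarrow> bool" where
  "periodic N phi \<longleftrightarrow> (\<forall>i j. phi (i + int N) j = phi i j \<and> phi i (j + int N) = phi i j)"

definition gsum :: "nat \<Rightarrow> grid \<Rightarrow> real" where
  "gsum N f = (\<Sum>i\<in>{1..int N}. \<Sum>j\<in>{1..int N}. f i j)"

definition gmean :: "nat \<Rightarrow> real \<Rightarrow> real \<Rightarrow> grid \<Rightarrow> real" where
  "gmean N h L phi = h^2 / L^2 * gsum N phi"

definition l2sq :: "nat \<Rightarrow> real \<Rightarrow> grid \<Rightarrow> real" where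
  "l2sq N h phi = h^2 * gsum N (\<lambda>i j. (phi i j)^2)"

definition Dx :: "real \<Rightarrow> grid \<Rightarrow> grid" where
  "Dx h phi i j = (phi (i+1) j - phi i j) / h"

definition Dy :: "real \<Rightarrow> grid \<Rightarrow> grid" where
  "Dy h phi i j = (phi i (j+1) - phi i j) / h"

definition gradsq :: "nat \<Rightarrow> real \<Rightarrow> grid \<Rightarrow> real" where
  "gradsq N h phi = h^2 * gsum N (\<lambda>i j. (Dx h phi i j)^2 + (Dy h phi i j)^2)"

definition lap :: "real \<Rightarrow> grid \<Rightarrow> grid" where
  "lap h phi i j = (phi (i+1) j + phi (i-1) j + phi i (j+1) + phi i (j-1) - 4 * phi i j) / h^2"

definition H2sq :: "nat \<Rightarrow> real \<Rightarrow> grid \<Rightarrow> real" where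
  "H2sq N h phi = l2sq N h phi + gradsq N h phi + l2sq N h (lap h phi)"

text \<open>Centre-to-vertex differences; the result at index (i,j) is the value at vertex (i+1/2,j+1/2).\<close>
definition VDx :: "real \<Rightarrow> grid \<Rightarrow> grid" where
  "VDx h phi i j = (phi (i+1) (j+1) - phi i (j+1) + phi (i+1) j - phi i j) / (2*h)"

definition VDy :: "real \<Rightarrow> grid \<Rightarrow> grid" where
  "VDy h phi i j = (phi (i+1) (j+1) - phi (i+1) j + phi i (j+1) - phi i j) / (2*h)"

definition vdx :: "real \<Rightarrow> grid \<Rightarrow> grid" where
  "vdx h g i j = (g i j - g (i-1) j + g i (j-1) - g (i-1) (j-1)) / (2*h)"

definition vdy :: "real \<Rightarrow> grid \<Rightarrow> grid" where
  "vdy h g i j = (g i j - g i (j-1) + g (i-1) j - g (i-1) (j-1)) / (2*h)"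

definition vgradsq :: "real \<Rightarrow> grid \<Rightarrow> grid" where
  "vgradsq h phi i j = (VDx h phi i j)^2 + (VDy h phi i j)^2"

definition vlap :: "real \<Rightarrow> grid \<Rightarrow> grid" where
  "vlap h phi i j = vdx h (VDx h phi) i j + vdy h (VDy h phi) i j"

definition vnonlin :: "real \<Rightarrow> grid \<Rightarrow> grid" where
  "vnonlin h phi i j =
     vdx h (\<lambda>a b. vgradsq h phi a b * VDx h phi a b) i j
   + vdy h (\<lambda>a b. vgradsq h phi a b * VDy h phi a b) i j"

definition vnorm4pow4 :: "nat \<Rightarrow> real \<Rightarrow> grid \<Rightarrow> real" where
  "vnorm4pow4 N h phi = h^2 * gsum N (\<lambda>i j. (vgradsq h phi i j)^2)"

definition vnorm2sq :: "nat \<Rightarrow> real \<Rightarrow> grid \<Rightarrow> real" where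
  "vnorm2sq N h phi = h^2 * gsum N (\<lambda>i j. vgradsq h phi i j)"

definition Fh :: "nat \<Rightarrow> real \<Rightarrow> real \<Rightarrow> grid \<Rightarrow> real" where
  "Fh N h eps phi = 1/4 * vnorm4pow4 N h phi - 1/2 * vnorm2sq N h phi
     + eps^2 / 2 * l2sq N h (lap h phi)"

definition Ftilde :: "nat \<Rightarrow> real \<Rightarrow> real \<Rightarrow> real \<Rightarrow> grid \<Rightarrow> grid \<Rightarrow> real" where
  "Ftilde N h eps tau phi psi = Fh N h eps phi
     + 1 / (4*tau) * l2sq N h (\<lambda>i j. phi i j - psi i j)
     + 1/2 * gradsq N h (\<lambda>i j. phi i j - psi i j)"

definition scheme_step :: "real \<Rightarrow> real \<Rightarrow> real \<Rightarrow> real \<Rightarrow> grid \<Rightarrow> grid \<Rightarrow> grid \<Rightarrow> bool" where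
  "scheme_step h eps tau A pm p pp \<longleftrightarrow>
    (\<forall>i j. (3 * pp i j - 4 * p i j + pm i j) / (2*tau)
       = vnonlin h pp i j
         - vlap h (\<lambda>a b. 2 * p a b - pm a b) i j
         - A * tau * lap h (lap h (\<lambda>a b. pp a b - p a b)) i j
         - eps^2 * lap h (lap h pp) i j)"

end

theory Submission
  imports Defs
begin

text \<open>Testing the scheme against the constant grid function (on the periodic grid, discrete
divergences and Laplacians sum to zero) shows that 3 phi(k+1) - 4 phi(k) + phi(k-1) has zero sum,
so every phi(k) inherits the zero mean of phi(0) and phi(1).
Testing it against phi(k+1) - phi(k) and summing by parts reduces the energy decay
Ftilde(phi(k+1), phi(k)) \<le> Ftilde(phi(k), phi(k-1)) to one pointwise inequality: convexity of
|\<xi>|^4/4 handles the implicit nonlinear term; the explicit extrapolation 2 phi(k) - phi(k-1) handles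
the concave -|\<xi>|^2/2 up to |\<nabla>v (phi(k) - phi(k-1))|^2/2, which is dominated by the edge-gradient
term of Ftilde(phi(k), phi(k-1)); and the BDF2 quotient together with the stabilisation
A \<tau> \<parallel>\<Delta>(phi(k+1) - phi(k))\<parallel>^2, A \<ge> 1/16, absorbs the new gradient term \<parallel>\<nabla>(phi(k+1) - phi(k))\<parallel>^2/2
by Young's inequality.
Finally r^2/4 - r/2 \<ge> -1/4 gives F_h(phi) \<ge> \<epsilon>^2/2 \<parallel>\<Delta>phi\<parallel>^2 - |\<Omega>|/4, and the coercivity
constant C1 turns the resulting bound on \<parallel>\<Delta>phi(k)\<parallel> into the H^2 bound.\<close>

lemma sum_int_interval_shift1:
  fixes F :: "int \<Rightarrow> 'a::ab_group_add"
  shows "(\<Sum>i=1..int n. F (i + 1)) = (\<Sum>i=1..int n. F i) - F 1 + F (int n + 1)"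
proof (induction n)
  case (Suc n)
  have "{1..int (Suc n)} = insert (int n + 1) {1..int n}" by auto
  with Suc show ?case by (simp add: add.commute)
qed simp

lemma sum_periodic_translate:
  fixes F :: "int \<Rightarrow> 'a::ab_group_add"
  assumes per: "\<And>i. F (i + int N) = F i"
  shows "(\<Sum>i=1..int N. F (i + a)) = (\<Sum>i=1..int N. F i)"
proof -
  have step: "(\<Sum>i=1..int N. F (i + (b + 1))) = (\<Sum>i=1..int N. F (i + b))" for b
    using sum_int_interval_shift1[of "\<lambda>i. F (i + b)" N] per[of "1 + b"] by (simp add: ac_simps)
  show ?thesis
  proof (induction a rule: int_induct[where k = 0])
    case (step1 a) then show ?case using step[of a] by simp
  next
    case (step2 a) then show ?case using step[of "a - 1"] by simp
  qed simp
qed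

text \<open>The shifted forms let the simplifier see periodicity of finite-difference stencils.\<close>

lemma periodicD:
  assumes "periodic N f"
  shows "f (i + int N) j = f i j" "f i (j + int N) = f i j"
    "f (i + int N + c) j = f (i + c) j" "f (i + int N - c) j = f (i - c) j"
    "f i (j + int N + c) = f i (j + c)" "f i (j + int N - c) = f i (j - c)"
proof -
  have per: "f (a + int N) b = f a b" "f a (b + int N) = f a b" for a b
    using assms unfolding periodic_def by auto
  show "f (i + int N) j = f i j" "f i (j + int N) = f i j" by (fact per)+
  show "f (i + int N + c) j = f (i + c) j" "f (i + int N - c) j = f (i - c) j"
    using per(1)[of "i + c" j] per(1)[of "i - c" j] by (simp_all add: algebra_simps)
  show "f i (j + int N + c) = f i (j + c)" "f i (j + int N - c) = f i (j - c)"
    using per(2)[of i "j + c"] per(2)[of i "j - c"] by (simp_all add: algebra_simps)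
qed

lemma periodic_mult: "periodic N f \<Longrightarrow> periodic N g \<Longrightarrow> periodic N (\<lambda>i j. f i j * g i j)"
  by (simp add: periodic_def)

lemma periodic_diff: "periodic N f \<Longrightarrow> periodic N g \<Longrightarrow> periodic N (\<lambda>i j. f i j - g i j)"
  by (simp add: periodic_def)

lemma periodic_extrapolate: "periodic N f \<Longrightarrow> periodic N g \<Longrightarrow> periodic N (\<lambda>i j. 2 * f i j - g i j)"
  by (simp add: periodic_def)

lemma periodic_const: "periodic N (\<lambda>i j. c)"
  by (simp add: periodic_def)

lemma periodic_transpose: "periodic N f \<Longrightarrow> periodic N (\<lambda>i j. f j i)"
  by (simp add: periodic_def)

lemma periodic_translate:
  assumes "periodic N f"
  shows "periodic N (\<lambda>i j. f (i - a) (j - b))"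
  unfolding periodic_def by (simp add: periodicD[OF assms])

lemma
  assumes "periodic N f"
  shows periodic_Dx: "periodic N (Dx h f)"
    and periodic_Dy: "periodic N (Dy h f)"
    and periodic_VDx: "periodic N (VDx h f)"
    and periodic_VDy: "periodic N (VDy h f)"
    and periodic_lap: "periodic N (lap h f)"
    and periodic_vgradsq: "periodic N (vgradsq h f)"
  unfolding periodic_def
  by (simp_all add: periodicD[OF assms] Dx_def Dy_def VDx_def VDy_def lap_def vgradsq_def)

lemma gsum_add: "gsum N (\<lambda>i j. f i j + g i j) = gsum N f + gsum N g"
  by (simp add: gsum_def sum.distrib)
lemma gsum_diff: "gsum N (\<lambda>i j. f i j - g i j) = gsum N f - gsum N g"
  by (simp add: gsum_def sum_subtractf)
lemma gsum_cmult: "gsum N (\<lambda>i j. c * f i j) = c * gsum N f"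
  by (simp add: gsum_def sum_distrib_left)
lemma gsum_divide: "gsum N (\<lambda>i j. f i j / c) = gsum N f / c"
  by (simp add: gsum_def sum_divide_distrib)
lemma gsum_uminus: "gsum N (\<lambda>i j. - f i j) = - gsum N f"
  by (simp add: gsum_def sum_negf)

lemmas gsum_linear = gsum_add gsum_diff gsum_cmult gsum_divide gsum_uminus

lemma gsum_mono: "(\<And>i j. f i j \<le> g i j) \<Longrightarrow> gsum N f \<le> gsum N g"
  by (simp add: gsum_def sum_mono)

lemma gsum_const: "gsum N (\<lambda>i j. c) = c * (real N)^2"
  by (simp add: gsum_def power2_eq_square)

lemma gsum_transpose: "gsum N (\<lambda>i j. f j i) = gsum N f"
  unfolding gsum_def by (rule sum.swap)

lemma gsum_translate:
  assumes "periodic N f"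
  shows "gsum N (\<lambda>i j. f (i + a) (j + b)) = gsum N f"
  unfolding gsum_def
  using sum_periodic_translate[of "\<lambda>j. f _ j" N b] sum_periodic_translate[of "\<lambda>i. \<Sum>j=1..int N. f i j" N a]
    periodicD[OF assms] by simp

lemma gsum_translate_factor:
  assumes "periodic N f" "periodic N g"
  shows "gsum N (\<lambda>i j. f (i + a) (j + b) * g i j) = gsum N (\<lambda>i j. f i j * g (i - a) (j - b))"
  using gsum_translate[OF periodic_mult[OF assms(1) periodic_translate[OF assms(2), of a b]], of a b] by simp

lemma gsum_vdx_mult:
  assumes pG: "periodic N G" and pg: "periodic N g"
  shows "gsum N (\<lambda>i j. vdx h G i j * g i j) = - gsum N (\<lambda>i j. G i j * VDx h g i j)"
proof -
  have "gsum N (\<lambda>i j. vdx h G i j * g i j) = (gsum N (\<lambda>i j. G i j * g i j)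
      - gsum N (\<lambda>i j. G (i - 1) j * g i j) + gsum N (\<lambda>i j. G i (j - 1) * g i j)
      - gsum N (\<lambda>i j. G (i - 1) (j - 1) * g i j)) / (2*h)"
    unfolding gsum_linear[symmetric] by (simp add: vdx_def algebra_simps diff_divide_distrib add_divide_distrib)
  also have "\<dots> = (gsum N (\<lambda>i j. G i j * g i j)
      - gsum N (\<lambda>i j. G i j * g (i + 1) j) + gsum N (\<lambda>i j. G i j * g i (j + 1))
      - gsum N (\<lambda>i j. G i j * g (i + 1) (j + 1))) / (2*h)"
    using gsum_translate_factor[OF pG pg, of "-1" 0] gsum_translate_factor[OF pG pg, of 0 "-1"]
      gsum_translate_factor[OF pG pg, of "-1" "-1"] by simp
  also have "\<dots> = - gsum N (\<lambda>i j. G i j * VDx h g i j)"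
    unfolding gsum_linear[symmetric] by (simp add: VDx_def algebra_simps diff_divide_distrib add_divide_distrib)
  finally show ?thesis .
qed

lemma gsum_vdy_mult:
  assumes "periodic N G" "periodic N g"
  shows "gsum N (\<lambda>i j. vdy h G i j * g i j) = - gsum N (\<lambda>i j. G i j * VDy h g i j)"
proof -
  have "vdy h G i j = vdx h (\<lambda>a b. G b a) j i" "VDy h g i j = VDx h (\<lambda>a b. g b a) j i" for i j
    by (simp_all add: vdx_def vdy_def VDx_def VDy_def)
  then show ?thesis
    using gsum_vdx_mult[OF periodic_transpose[OF assms(1)] periodic_transpose[OF assms(2)], of h]
      gsum_transpose[of N "\<lambda>j i. vdx h (\<lambda>a b. G b a) j i * g i j"]
      gsum_transpose[of N "\<lambda>j i. G i j * VDx h (\<lambda>a b. g b a) j i"]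
    by simp
qed

lemma gsum_vdiv_mult:
  assumes "periodic N G" "periodic N H" "periodic N g"
  shows "gsum N (\<lambda>i j. (vdx h G i j + vdy h H i j) * g i j)
    = - gsum N (\<lambda>i j. G i j * VDx h g i j + H i j * VDy h g i j)"
  using gsum_vdx_mult[OF assms(1,3), of h] gsum_vdy_mult[OF assms(2,3), of h]
  by (simp add: distrib_right gsum_add)

lemma gsum_vnonlin_mult:
  assumes "periodic N f" "periodic N g"
  shows "gsum N (\<lambda>i j. vnonlin h f i j * g i j)
    = - gsum N (\<lambda>i j. vgradsq h f i j * (VDx h f i j * VDx h g i j + VDy h f i j * VDy h g i j))"
  using gsum_vdiv_mult[of N "\<lambda>a b. vgradsq h f a b * VDx h f a b" "\<lambda>a b. vgradsq h f a b * VDy h f a b" g h]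
    periodic_mult periodic_vgradsq periodic_VDx periodic_VDy assms
  by (simp add: vnonlin_def algebra_simps)

lemma gsum_vlap_mult:
  assumes "periodic N f" "periodic N g"
  shows "gsum N (\<lambda>i j. vlap h f i j * g i j)
    = - gsum N (\<lambda>i j. VDx h f i j * VDx h g i j + VDy h f i j * VDy h g i j)"
  using gsum_vdiv_mult[OF periodic_VDx[OF assms(1)] periodic_VDy[OF assms(1)] assms(2)]
  by (simp add: vlap_def)

lemma gsum_lap_mult:
  assumes pf: "periodic N f" and pg: "periodic N g"
  shows "gsum N (\<lambda>i j. lap h f i j * g i j)
    = - gsum N (\<lambda>i j. Dx h f i j * Dx h g i j + Dy h f i j * Dy h g i j)"
proof -
  have pfg: "periodic N (\<lambda>i j. f i j * g i j)" by (rule periodic_mult[OF pf pg])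
  have "gsum N (\<lambda>i j. lap h f i j * g i j) = (gsum N (\<lambda>i j. f (i + 1) j * g i j)
      + gsum N (\<lambda>i j. f (i - 1) j * g i j) + gsum N (\<lambda>i j. f i (j + 1) * g i j)
      + gsum N (\<lambda>i j. f i (j - 1) * g i j) - 4 * gsum N (\<lambda>i j. f i j * g i j)) / h^2"
    unfolding gsum_linear[symmetric] by (simp add: lap_def algebra_simps diff_divide_distrib add_divide_distrib)
  also have "\<dots> = (gsum N (\<lambda>i j. f (i + 1) j * g i j) - gsum N (\<lambda>i j. f (i + 1) j * g (i + 1) j)
      + gsum N (\<lambda>i j. f i j * g (i + 1) j) + gsum N (\<lambda>i j. f i (j + 1) * g i j)
      - gsum N (\<lambda>i j. f i (j + 1) * g i (j + 1)) + gsum N (\<lambda>i j. f i j * g i (j + 1))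
      - 2 * gsum N (\<lambda>i j. f i j * g i j)) / h^2"
    using gsum_translate_factor[OF pf pg, of "-1" 0] gsum_translate_factor[OF pf pg, of 0 "-1"]
      gsum_translate[OF pfg, of 1 0] gsum_translate[OF pfg, of 0 1] by simp
  also have "\<dots> = - gsum N (\<lambda>i j. Dx h f i j * Dx h g i j + Dy h f i j * Dy h g i j)"
    unfolding gsum_linear[symmetric]
    by (simp add: Dx_def Dy_def power2_eq_square algebra_simps diff_divide_distrib add_divide_distrib)
  finally show ?thesis .
qed

lemma gsum_lap_mult_commute:
  assumes "periodic N f" "periodic N g"
  shows "gsum N (\<lambda>i j. lap h f i j * g i j) = gsum N (\<lambda>i j. f i j * lap h g i j)"
  using gsum_lap_mult[OF assms, of h] gsum_lap_mult[OF assms(2,1), of h]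
  by (simp add: mult.commute)

lemma vnorm2sq_le_gradsq:
  assumes pf: "periodic N f"
  shows "vnorm2sq N h f \<le> gradsq N h f"
proof -
  have avg: "((x + y) / 2)^2 \<le> (x^2 + y^2) / 2" for x y :: real
    using zero_le_power2[of "x - y"] by (simp add: power2_eq_square field_simps)
  have VD_average: "VDx h f i j = (Dx h f i (j + 1) + Dx h f i j) / 2"
      "VDy h f i j = (Dy h f (i + 1) j + Dy h f i j) / 2" for i j
    by (simp_all add: VDx_def VDy_def Dx_def Dy_def field_split_simps)
  have "vgradsq h f i j \<le> ((Dx h f i (j + 1))^2 + (Dx h f i j)^2
      + (Dy h f (i + 1) j)^2 + (Dy h f i j)^2) / 2" for i j
    using avg[of "Dx h f i (j + 1)" "Dx h f i j"] avg[of "Dy h f (i + 1) j" "Dy h f i j"]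
    unfolding vgradsq_def VD_average by simp
  then have "gsum N (vgradsq h f) \<le> (gsum N (\<lambda>i j. (Dx h f i (j + 1))^2) + gsum N (\<lambda>i j. (Dx h f i j)^2)
      + gsum N (\<lambda>i j. (Dy h f (i + 1) j)^2) + gsum N (\<lambda>i j. (Dy h f i j)^2)) / 2"
    unfolding gsum_linear[symmetric] by (rule gsum_mono)
  also have "\<dots> = gsum N (\<lambda>i j. (Dx h f i j)^2 + (Dy h f i j)^2)"
    using gsum_translate[OF periodic_mult[OF periodic_Dx[OF pf, of h] periodic_Dx[OF pf, of h]], of 0 1]
      gsum_translate[OF periodic_mult[OF periodic_Dy[OF pf, of h] periodic_Dy[OF pf, of h]], of 1 0]
    by (simp add: gsum_add power2_eq_square)
  finally show ?thesis
    unfolding vnorm2sq_def gradsq_def by (simp add: mult_left_mono)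
qed

lemma scheme_step_weak_form:
  assumes per: "periodic N pm" "periodic N p" "periodic N pp" and pg: "periodic N g"
    and sch: "scheme_step h eps tau A pm p pp"
  shows "gsum N (\<lambda>i j. (3 * pp i j - 4 * p i j + pm i j) / (2 * tau) * g i j)
    = - gsum N (\<lambda>i j. vgradsq h pp i j * (VDx h pp i j * VDx h g i j + VDy h pp i j * VDy h g i j))
      + gsum N (\<lambda>i j. VDx h (\<lambda>a b. 2 * p a b - pm a b) i j * VDx h g i j
                   + VDy h (\<lambda>a b. 2 * p a b - pm a b) i j * VDy h g i j)
      - A * tau * gsum N (\<lambda>i j. lap h (\<lambda>a b. pp a b - p a b) i j * lap h g i j)
      - eps^2 * gsum N (\<lambda>i j. lap h pp i j * lap h g i j)"
proof -
  define u where "u = (\<lambda>a b. 2 * p a b - pm a b)"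
  define d where "d = (\<lambda>a b. pp a b - p a b)"
  have pu: "periodic N u" unfolding u_def by (rule periodic_extrapolate[OF per(2,1)])
  have pd: "periodic N d" unfolding d_def by (rule periodic_diff[OF per(3,2)])
  have "(3 * pp i j - 4 * p i j + pm i j) / (2 * tau) * g i j
    = (vnonlin h pp i j - vlap h u i j - A * tau * lap h (lap h d) i j - eps^2 * lap h (lap h pp) i j) * g i j"
    for i j using sch unfolding scheme_step_def u_def d_def by simp
  then have "gsum N (\<lambda>i j. (3 * pp i j - 4 * p i j + pm i j) / (2 * tau) * g i j)
    = gsum N (\<lambda>i j. vnonlin h pp i j * g i j) - gsum N (\<lambda>i j. vlap h u i j * g i j)
      - A * tau * gsum N (\<lambda>i j. lap h (lap h d) i j * g i j)
      - eps^2 * gsum N (\<lambda>i j. lap h (lap h pp) i j * g i j)"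
    unfolding gsum_linear[symmetric] by (simp add: left_diff_distrib mult.assoc)
  then show ?thesis
    unfolding gsum_vnonlin_mult[OF per(3) pg] gsum_vlap_mult[OF pu pg]
      gsum_lap_mult_commute[OF periodic_lap[OF pd] pg] gsum_lap_mult_commute[OF periodic_lap[OF per(3)] pg]
    by (simp add: u_def d_def)
qed

lemma scheme_step_sum:
  assumes "tau > 0" and "periodic N pm" "periodic N p" "periodic N pp"
    and "scheme_step h eps tau A pm p pp"
  shows "3 * gsum N pp - 4 * gsum N p + gsum N pm = 0"
proof -
  have "VDx h (\<lambda>a b. 1) i j = 0" "VDy h (\<lambda>a b. 1) i j = 0" "lap h (\<lambda>a b. 1) i j = 0" for i j
    by (simp_all add: VDx_def VDy_def lap_def)
  then have "gsum N (\<lambda>i j. (3 * pp i j - 4 * p i j + pm i j) / (2 * tau)) = 0"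
    using scheme_step_weak_form[OF assms(2-4) periodic_const[of N 1] assms(5)] by (simp add: gsum_const)
  then show ?thesis
    using \<open>tau > 0\<close> by (simp only: gsum_linear) simp
qed

lemma scheme_preserves_zero_sum:
  assumes "tau > 0" and per: "\<And>k. periodic N (phi k)"
    and "gsum N (phi 0) = 0" "gsum N (phi 1) = 0"
    and sch: "\<And>k. scheme_step h eps tau A (phi k) (phi (Suc k)) (phi (Suc (Suc k)))"
  shows "gsum N (phi k) = 0"
proof -
  have "gsum N (phi k) = 0 \<and> gsum N (phi (Suc k)) = 0"
  proof (induction k)
    case (Suc k)
    then show ?case using scheme_step_sum[OF \<open>tau > 0\<close> per per per sch[of k]] by simp
  qed (use assms in simp)
  then show ?thesis ..
qed

lemma quartic_energy_convex:
  fixes a1 a2 b1 b2 :: real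
  shows "(a1^2 + a2^2)^2 / 4 - (b1^2 + b2^2)^2 / 4 \<le> (a1^2 + a2^2) * (a1 * (a1 - b1) + a2 * (a2 - b2))"
proof -
  have key: "s^2 / 4 - t^2 / 4 \<le> s * (s - q)" if "0 \<le> s" "2 * q \<le> s + t" for s t q :: real
  proof -
    have "s * ((s - t) / 2) \<le> s * (s - q)"
      using that by (intro mult_left_mono) auto
    moreover have "s^2 / 4 - t^2 / 4 = s * ((s - t) / 2) - (s - t)^2 / 4"
      by (simp add: power2_eq_square field_simps)
    ultimately show ?thesis
      using zero_le_power2[of "s - t"] by linarith
  qed
  have "2 * (a1 * b1 + a2 * b2) \<le> (a1^2 + a2^2) + (b1^2 + b2^2)"
    using zero_le_power2[of "a1 - b1"] zero_le_power2[of "a2 - b2"] by (simp add: power2_eq_square algebra_simps)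
  moreover have "a1 * (a1 - b1) + a2 * (a2 - b2) = (a1^2 + a2^2) - (a1 * b1 + a2 * b2)"
    by (simp add: power2_eq_square algebra_simps)
  ultimately show ?thesis
    using key by simp
qed

lemma extrapolation_concave:
  fixes a1 a2 b1 b2 c1 c2 :: real
  shows "(2 * b1 - c1) * (a1 - b1) + (2 * b2 - c2) * (a2 - b2)
    \<le> (a1^2 + a2^2) / 2 - (b1^2 + b2^2) / 2 + ((b1 - c1)^2 + (b2 - c2)^2) / 2"
proof -
  have "(a1^2 + a2^2) / 2 - (b1^2 + b2^2) / 2 + ((b1 - c1)^2 + (b2 - c2)^2) / 2
      - ((2 * b1 - c1) * (a1 - b1) + (2 * b2 - c2) * (a2 - b2))
    = ((a1 - 2 * b1 + c1)^2 + (a2 - 2 * b2 + c2)^2) / 2"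
    by (simp add: power2_eq_square field_simps)
  then show ?thesis by (smt (verit) zero_le_power2 divide_nonneg_pos)
qed

lemma bdf2_stabilised:
  fixes d d' l tau A :: real
  assumes "tau > 0" "A \<ge> 1/16"
  shows "d^2 / (4 * tau) - d'^2 / (4 * tau) - l * d / 2 \<le> (3 * d - d') / (2 * tau) * d + A * tau * l^2"
proof -
  have "(3 * d - d') / (2 * tau) * d + tau / 16 * l^2 - (d^2 / (4 * tau) - d'^2 / (4 * tau) - l * d / 2)
     = (4 * d + tau * l)^2 / (16 * tau) + (d - d')^2 / (4 * tau)"
    using assms(1) by (simp add: power2_eq_square field_simps)
  moreover have "tau / 16 * l^2 \<le> A * tau * l^2"
    using assms by (intro mult_right_mono) auto
  moreover have "(4 * d + tau * l)^2 / (16 * tau) \<ge> 0" "(d - d')^2 / (4 * tau) \<ge> 0"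
    using assms(1) by auto
  ultimately show ?thesis by linarith
qed

text \<open>Here a, b, c are the vertex gradients of phi(k+1), phi(k), phi(k-1) at one vertex, P, Q the
Laplacians and x, y, z the values of phi(k+1), phi(k), phi(k-1); the term (P - Q) (x - y) becomes
-\<parallel>\<nabla>(phi(k+1) - phi(k))\<parallel>^2 after summation by parts.\<close>

lemma energy_density_step:
  fixes a1 a2 b1 b2 c1 c2 P Q x y z tau A eps :: real
  assumes "tau > 0" "A \<ge> 1/16"
  shows "((a1^2 + a2^2)^2 / 4 - (a1^2 + a2^2) / 2 + eps^2 / 2 * P^2 + (x - y)^2 / (4 * tau))
      - ((b1^2 + b2^2)^2 / 4 - (b1^2 + b2^2) / 2 + eps^2 / 2 * Q^2 + (y - z)^2 / (4 * tau))
      - (P - Q) * (x - y) / 2 - ((b1 - c1)^2 + (b2 - c2)^2) / 2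
    \<le> (3 * x - 4 * y + z) / (2 * tau) * (x - y)
      + (a1^2 + a2^2) * (a1 * (a1 - b1) + a2 * (a2 - b2))
      - ((2 * b1 - c1) * (a1 - b1) + (2 * b2 - c2) * (a2 - b2))
      + A * tau * (P - Q)^2 + eps^2 * (P * (P - Q))"
proof -
  have "eps^2 / 2 * P^2 - eps^2 / 2 * Q^2 \<le> eps^2 * (P * (P - Q))"
    using mult_left_mono[OF zero_le_power2[of "P - Q"], of "eps^2 / 2"]
    by (simp add: power2_eq_square algebra_simps)
  moreover have "3 * (x - y) - (y - z) = 3 * x - 4 * y + z" by simp
  ultimately show ?thesis
    using quartic_energy_convex[of a1 a2 b1 b2] extrapolation_concave[of b1 c1 a1 b2 c2 a2]
      bdf2_stabilised[OF assms, of "x - y" "y - z" "P - Q", unfolded \<open>3 * (x - y) - (y - z) = _\<close>]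
    by linarith
qed

lemma VDx_diff: "VDx h (\<lambda>a b. f a b - g a b) i j = VDx h f i j - VDx h g i j"
  and VDy_diff: "VDy h (\<lambda>a b. f a b - g a b) i j = VDy h f i j - VDy h g i j"
  and lap_diff: "lap h (\<lambda>a b. f a b - g a b) i j = lap h f i j - lap h g i j"
  and VDx_scale: "VDx h (\<lambda>a b. c * f a b) i j = c * VDx h f i j"
  and VDy_scale: "VDy h (\<lambda>a b. c * f a b) i j = c * VDy h f i j"
  by (simp_all add: VDx_def VDy_def lap_def diff_divide_distrib add_divide_distrib algebra_simps)

lemmas VD_lap_linear = VDx_diff VDy_diff lap_diff VDx_scale VDy_scale

lemma scheme_step_energy:
  assumes "tau > 0" "A \<ge> 1/16"
    and per: "periodic N pm" "periodic N p" "periodic N pp"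
    and sch: "scheme_step h eps tau A pm p pp"
  shows "Ftilde N h eps tau pp p \<le> Ftilde N h eps tau p pm"
proof -
  define F0 where "F0 x y i j = (vgradsq h x i j)^2 / 4 - vgradsq h x i j / 2
    + eps^2 / 2 * (lap h x i j)^2 + (x i j - y i j)^2 / (4 * tau)" for x y :: grid and i j
  define d where "d = (\<lambda>a b. pp a b - p a b)"
  define dd where "dd = (\<lambda>a b. p a b - pm a b)"
  define u where "u = (\<lambda>a b. 2 * p a b - pm a b)"
  have pd: "periodic N d" unfolding d_def by (rule periodic_diff[OF per(3,2)])
  have Ftilde_eq: "Ftilde N h eps tau x y = h^2 * gsum N (F0 x y) + gradsq N h (\<lambda>i j. x i j - y i j) / 2"
    for x y
    unfolding Ftilde_def Fh_def vnorm4pow4_def vnorm2sq_def l2sq_def F0_def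
    by (simp only: gsum_linear) (simp add: algebra_simps)
  define E where "E i j = (3 * pp i j - 4 * p i j + pm i j) / (2 * tau) * d i j
    + vgradsq h pp i j * (VDx h pp i j * VDx h d i j + VDy h pp i j * VDy h d i j)
    - (VDx h u i j * VDx h d i j + VDy h u i j * VDy h d i j)
    + A * tau * (lap h d i j)^2 + eps^2 * (lap h pp i j * lap h d i j)" for i j
  have "gsum N E = 0"
    using scheme_step_weak_form[OF per pd sch] unfolding E_def u_def d_def gsum_linear
    by (simp add: power2_eq_square)
  moreover have "gsum N (\<lambda>i j. F0 pp p i j - F0 p pm i j - lap h d i j * d i j / 2 - vgradsq h dd i j / 2)
      \<le> gsum N E"
  proof (rule gsum_mono)
    fix i j
    show "F0 pp p i j - F0 p pm i j - lap h d i j * d i j / 2 - vgradsq h dd i j / 2 \<le> E i j"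
      unfolding F0_def E_def d_def dd_def u_def vgradsq_def VD_lap_linear by (rule energy_density_step[OF assms(1,2)])
  qed
  ultimately have "gsum N (F0 pp p) - gsum N (\<lambda>i j. lap h d i j * d i j) / 2
      \<le> gsum N (F0 p pm) + gsum N (vgradsq h dd) / 2"
    by (simp only: gsum_linear)
  then have "h^2 * (gsum N (F0 pp p) - gsum N (\<lambda>i j. lap h d i j * d i j) / 2)
      \<le> h^2 * (gsum N (F0 p pm) + gsum N (vgradsq h dd) / 2)"
    by (rule mult_left_mono) simp
  moreover have "gradsq N h d = - (h^2 * gsum N (\<lambda>i j. lap h d i j * d i j))"
    unfolding gradsq_def gsum_lap_mult[OF pd pd] by (simp add: power2_eq_square)
  moreover have "h^2 * gsum N (vgradsq h dd) \<le> gradsq N h dd"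
    using vnorm2sq_le_gradsq[OF periodic_diff[OF per(2,1)], of h] unfolding vnorm2sq_def dd_def .
  ultimately show ?thesis
    unfolding Ftilde_eq d_def[symmetric] dd_def[symmetric] by (simp add: algebra_simps)
qed

lemma scheme_energy_bound:
  assumes "tau > 0" "A \<ge> 1/16" and per: "\<And>k. periodic N (phi k)"
    and sch: "\<And>k. scheme_step h eps tau A (phi k) (phi (Suc k)) (phi (Suc (Suc k)))"
  shows "Ftilde N h eps tau (phi (Suc k)) (phi k) \<le> Ftilde N h eps tau (phi 1) (phi 0)"
proof (induction k)
  case (Suc k)
  then show ?case
    using scheme_step_energy[OF assms(1,2) per per per sch[of k]] by simp
qed simp

lemma Fh_le_Ftilde:
  assumes "tau > 0"
  shows "Fh N h eps x \<le> Ftilde N h eps tau x y"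
  using assms unfolding Ftilde_def l2sq_def gradsq_def gsum_def
  by (simp add: sum_nonneg)

lemma Fh_lower_bound:
  "eps^2 / 2 * l2sq N h (lap h x) - h^2 * (real N)^2 / 4 \<le> Fh N h eps x"
proof -
  have "- 1/4 \<le> (vgradsq h x i j)^2 / 4 - vgradsq h x i j / 2" for i j
    using zero_le_power2[of "vgradsq h x i j - 1"] by (simp add: power2_eq_square algebra_simps)
  then have "gsum N (\<lambda>i j. - 1/4) \<le> gsum N (\<lambda>i j. (vgradsq h x i j)^2 / 4 - vgradsq h x i j / 2)"
    by (rule gsum_mono)
  then have "h^2 * gsum N (\<lambda>i j. - 1/4) \<le> h^2 * gsum N (\<lambda>i j. (vgradsq h x i j)^2 / 4 - vgradsq h x i j / 2)"
    by (rule mult_left_mono) simp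
  then show ?thesis
    unfolding Fh_def vnorm4pow4_def vnorm2sq_def by (simp only: gsum_linear gsum_const) (simp add: algebra_simps)
qed

lemma H2sq_le_energy_bound:
  assumes "eps > 0" "C1 > 0" "tau > 0"
    and coercive: "C1 * H2sq N h x \<le> l2sq N h (lap h x)"
    and energy: "Ftilde N h eps tau x y \<le> C0"
  shows "H2sq N h x \<le> 2 * (C0 + h^2 * (real N)^2) / (C1 * eps^2)"
proof -
  have "eps^2 * (C1 * H2sq N h x) \<le> eps^2 * l2sq N h (lap h x)"
    using coercive by (rule mult_left_mono) simp
  moreover have "eps^2 * l2sq N h (lap h x) \<le> 2 * C0 + h^2 * (real N)^2 / 2"
    using Fh_lower_bound[of eps N h x] Fh_le_Ftilde[OF \<open>tau > 0\<close>, of N h eps x y] energy by simp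
  moreover have "0 \<le> h^2 * (real N)^2" by simp
  ultimately have "eps^2 * (C1 * H2sq N h x) \<le> 2 * C0 + 2 * (h^2 * (real N)^2)"
    by linarith
  then show ?thesis
    using \<open>eps > 0\<close> \<open>C1 > 0\<close> by (simp add: pos_le_divide_eq mult_ac distrib_left)
qed

theorem mainTheorem8:
  fixes L tau eps A C1 :: real and N :: nat and phi :: "nat \<Rightarrow> grid"
  assumes "L > 0" and "N > 0"
    and "tau > 0" and "eps > 0" and "A \<ge> 1/16"
    and per: "\<And>k. periodic N (phi k)"
    and mean0: "gmean N (L / real N) L (phi 0) = 0" "gmean N (L / real N) L (phi 1) = 0"
    and scheme: "\<And>k. k \<ge> 1 \<Longrightarrow>
        scheme_step (L / real N) eps tau A (phi (k - 1)) (phi k) (phi (k + 1))"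
    and "C1 > 0"
    and C1: "\<And>psi. periodic N psi \<Longrightarrow> gmean N (L / real N) L psi = 0 \<Longrightarrow>
        l2sq N (L / real N) (lap (L / real N) psi) \<ge> C1 * H2sq N (L / real N) psi"
  shows "\<forall>k\<ge>1. sqrt (H2sq N (L / real N) (phi k))
      \<le> sqrt (2 * (Ftilde N (L / real N) eps tau (phi 1) (phi 0) + L^2) / (C1 * eps^2))"
proof (intro allI impI)
  fix k :: nat assume "k \<ge> 1"
  then obtain m where k: "k = Suc m" by (cases k) auto
  define h where "h = L / real N"
  have sch: "\<And>k. scheme_step h eps tau A (phi k) (phi (Suc k)) (phi (Suc (Suc k)))"
    using scheme[of "Suc _"] unfolding h_def by simp
  have "gsum N (phi 0) = 0" "gsum N (phi 1) = 0"
    using mean0 \<open>L > 0\<close> \<open>N > 0\<close> unfolding gmean_def by simp_all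
  then have "gsum N (phi j) = 0" for j
    by (rule scheme_preserves_zero_sum[where phi = phi, OF \<open>tau > 0\<close> per _ _ sch])
  then have "C1 * H2sq N h (phi k) \<le> l2sq N h (lap h (phi k))"
    using C1[OF per] unfolding gmean_def h_def by simp
  moreover have "Ftilde N h eps tau (phi k) (phi m) \<le> Ftilde N h eps tau (phi 1) (phi 0)"
    unfolding k by (rule scheme_energy_bound[where phi = phi, OF \<open>tau > 0\<close> \<open>A \<ge> 1/16\<close> per sch])
  moreover have "h^2 * (real N)^2 = L^2"
    using \<open>N > 0\<close> by (simp add: h_def power_divide)
  ultimately have "H2sq N h (phi k) \<le> 2 * (Ftilde N h eps tau (phi 1) (phi 0) + L^2) / (C1 * eps^2)"
    using H2sq_le_energy_bound[OF \<open>eps > 0\<close> \<open>C1 > 0\<close> \<open>tau > 0\<close>] by metis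
  then show "sqrt (H2sq N (L / real N) (phi k))
      \<le> sqrt (2 * (Ftilde N (L / real N) eps tau (phi 1) (phi 0) + L^2) / (C1 * eps^2))"
    unfolding h_def by (rule real_sqrt_le_mono)
qed

end
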